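(* Let $p$ be a smooth function on $T^\ast(\mathbb{R}^n)\smallsetminus0$ with $\operatorname{Re}p=\xi_1$, and let $\gamma$ and $\gamma_j$, $j\ge1$, be bicharacteristics of $\operatorname{Re}p=\xi_1$ such that $\operatorname{Im}p$ strongly changes sign from $-$ to $+$ on $\gamma_j$ for each $j$. If $\gamma_j\dashrightarrow\gamma$ as $j\to\infty$, then $L_p(\gamma)\le\liminf_{j\to\infty}L_p(\gamma_j)$.
   Context: Write points of $T^\ast(\mathbb{R}^n)$ as $(x_1,x',\xi_1,\xi')$. A bicharacteristic of $\xi_1$ is $\gamma=[a,b]\times\{w_0\}=\{(t,x',0,\xi'):a\le t\le b\}$, $w_0=(x',0,\xi')$; write $g(t,w)$; $|\gamma|=b-a$. For $\gamma_j=[a_j,b_j]\times\{w_j\}$, $\gamma_j\dashrightarrow\gamma$ means $\liminf a_j\ge a$, $\limsup b_j\le b$, $w_j\to w_0$. $\operatorname{Im}p$ strongly changes sign from $-$ to $+$ on $[a,b]\times\{w_0\}$ if $\operatorname{Im}p(t,w_0)=0$ for $a\le t\le b$ and for every $\varepsilon>0$ there exist $a-\varepsilon<s_-<a$, $b<s_+<b+\varepsilon$ with $\operatorname{Im}p(s_-,w_0)<0<\operatorname{Im}p(s_+,w_0)$. If some sequence of bicharacteristics $\gamma_j$ of $\xi_1$ with this sign change satisfies $\gamma_j\dashrightarrow\gamma$, then $L_p(\gamma)=\inf\liminf_j|\gamma_j|$ over all such sequences. *)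

theory Defs
  imports "HOL-Analysis.Analysis"
begin

text \<open>A point of T*(R^n), n = 1 + CARD('m), written (x1, x', xi1, xi').\<close>
type_synonym 'm cpt = "real \<times> (real^'m) \<times> real \<times> (real^'m)"

definition cotangent_minus_zero :: "'m::finite cpt set" where
  "cotangent_minus_zero = {(x1, x', xi1, xi'). xi1 \<noteq> 0 \<or> xi' \<noteq> 0}"

fun Ck_on :: "nat \<Rightarrow> 'a::real_normed_vector set \<Rightarrow> ('a \<Rightarrow> 'b::real_normed_vector) \<Rightarrow> bool" where
  "Ck_on 0 S f = continuous_on S f"
| "Ck_on (Suc k) S f = (f differentiable_on S \<and>
      (\<forall>v. Ck_on k S (\<lambda>x. frechet_derivative f (at x) v)))"

definition smooth_on :: "'a::real_normed_vector set \<Rightarrow> ('a \<Rightarrow> 'b::real_normed_vector) \<Rightarrow> bool" where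
  "smooth_on S f = (\<forall>k. Ck_on k S f)"

text \<open>A bicharacteristic of xi1: gamma = [a,b] x {w0}, w0 = (x',0,xi'), encoded as (a, b, x', xi'),
  lying in T*(R^n) minus 0 (i.e. xi' /= 0).\<close>
type_synonym 'm bichar = "real \<times> real \<times> (real^'m) \<times> (real^'m)"

definition is_bichar :: "'m::finite bichar \<Rightarrow> bool" where
  "is_bichar \<gamma> = (case \<gamma> of (a, b, x', xi') \<Rightarrow> a \<le> b \<and> xi' \<noteq> 0)"

definition gpt :: "real \<Rightarrow> real^'m \<Rightarrow> real^'m \<Rightarrow> 'm cpt" where
  "gpt t x' xi' = (t, x', 0, xi')"

definition bichar_len :: "'m::finite bichar \<Rightarrow> real" where
  "bichar_len \<gamma> = (case \<gamma> of (a, b, _, _) \<Rightarrow> b - a)"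

definition strong_sign_change :: "('m::finite cpt \<Rightarrow> complex) \<Rightarrow> 'm bichar \<Rightarrow> bool" where
  "strong_sign_change p \<gamma> = (case \<gamma> of (a, b, x', xi') \<Rightarrow>
      (\<forall>t. a \<le> t \<and> t \<le> b \<longrightarrow> Im (p (gpt t x' xi')) = 0) \<and>
      (\<forall>\<epsilon>>0. \<exists>s1 s2. a - \<epsilon> < s1 \<and> s1 < a \<and> b < s2 \<and> s2 < b + \<epsilon> \<and>
          Im (p (gpt s1 x' xi')) < 0 \<and> 0 < Im (p (gpt s2 x' xi'))))"

definition bichar_conv :: "(nat \<Rightarrow> 'm::finite bichar) \<Rightarrow> 'm bichar \<Rightarrow> bool" where
  "bichar_conv G \<gamma> = (case \<gamma> of (a, b, x', xi') \<Rightarrow>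
      liminf (\<lambda>j. ereal (fst (G j))) \<ge> ereal a \<and>
      limsup (\<lambda>j. ereal (fst (snd (G j)))) \<le> ereal b \<and>
      ((\<lambda>j. (fst (snd (snd (G j))), snd (snd (snd (G j))))) \<longlonglongrightarrow> (x', xi')))"

text \<open>L_p(gamma): infimum, over all sequences of bicharacteristics of xi1 on which Im p
  strongly changes sign from - to + and which converge (dashed) to gamma, of liminf |gamma_j|.
  (Only meaningful when such a sequence exists; otherwise this is +infinity.)\<close>
definition Lp :: "('m::finite cpt \<Rightarrow> complex) \<Rightarrow> 'm bichar \<Rightarrow> ereal" where
  "Lp p \<gamma> = Inf {liminf (\<lambda>j. ereal (bichar_len (G j))) | G.
      (\<forall>j. is_bichar (G j) \<and> strong_sign_change p (G j)) \<and> bichar_conv G \<gamma>}"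

end

theory Submission
  imports Defs
begin

text \<open>The proof is a diagonal argument. If \<open>liminf\<^sub>j L\<^sub>p(\<gamma>\<^sub>j) < c\<close>, then for every \<open>\<epsilon> > 0\<close>
  some \<open>\<gamma>\<^sub>j\<close> is \<open>\<epsilon>/2\<close>-close to \<open>\<gamma>\<close> and has \<open>L\<^sub>p(\<gamma>\<^sub>j) < c\<close>, hence is approached by
  sign-changing bicharacteristics of length \<open>< c\<close>, one of which is \<open>\<epsilon>/2\<close>-close to \<open>\<gamma>\<^sub>j\<close>.
  Choosing one such bicharacteristic for each \<open>\<epsilon> = 1/(m+1)\<close> yields an admissible sequence
  converging to \<open>\<gamma>\<close> with lengths \<open>< c\<close>, so \<open>L\<^sub>p(\<gamma>) \<le> c\<close>.\<close>

lemma frequently_less_if_liminf_less: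
  fixes u :: "nat \<Rightarrow> ereal"
  assumes "liminf u < l"
  shows "\<exists>\<^sub>F j in sequentially. u j < l"
  using liminf_upper_bound[OF assms] by (auto simp: frequently_sequentially intro: less_imp_le)

lemma ereal_le_liminf_iff:
  "ereal a \<le> liminf (\<lambda>j. ereal (f j)) \<longleftrightarrow> (\<forall>e>0. \<forall>\<^sub>F j in sequentially. a - e < f j)"
  unfolding le_Liminf_iff
proof (intro iffI allI impI)
  fix e :: real assume "\<forall>y<ereal a. \<forall>\<^sub>F j in sequentially. y < ereal (f j)" "e > 0"
  then show "\<forall>\<^sub>F j in sequentially. a - e < f j" by (auto dest: spec[of _ "ereal (a - e)"])
next
  fix y assume near: "\<forall>e>0. \<forall>\<^sub>F j in sequentially. a - e < f j" and "y < ereal a"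
  then show "\<forall>\<^sub>F j in sequentially. y < ereal (f j)"
  proof (cases y)
    case (real r)
    with near[rule_format, of "a - r"] \<open>y < ereal a\<close> show ?thesis by simp
  qed auto
qed

lemma limsup_le_ereal_iff:
  "limsup (\<lambda>j. ereal (f j)) \<le> ereal b \<longleftrightarrow> (\<forall>e>0. \<forall>\<^sub>F j in sequentially. f j < b + e)"
  unfolding Limsup_le_iff
proof (intro iffI allI impI)
  fix e :: real assume "\<forall>y>ereal b. \<forall>\<^sub>F j in sequentially. ereal (f j) < y" "e > 0"
  then show "\<forall>\<^sub>F j in sequentially. f j < b + e" by (auto dest: spec[of _ "ereal (b + e)"])
next
  fix y assume near: "\<forall>e>0. \<forall>\<^sub>F j in sequentially. f j < b + e" and "ereal b < y"
  then show "\<forall>\<^sub>F j in sequentially. ereal (f j) < y"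
  proof (cases y)
    case (real r)
    with near[rule_format, of "r - b"] \<open>ereal b < y\<close> show ?thesis by simp
  qed auto
qed

definition bichar_near :: "real \<Rightarrow> 'm::finite bichar \<Rightarrow> 'm bichar \<Rightarrow> bool" where
  "bichar_near e K \<gamma> \<longleftrightarrow>
     fst \<gamma> - e < fst K \<and> fst (snd K) < fst (snd \<gamma>) + e \<and> dist (snd (snd K)) (snd (snd \<gamma>)) < e"

lemma bichar_conv_iff_eventually_near:
  "bichar_conv G \<gamma> \<longleftrightarrow> (\<forall>e>0. \<forall>\<^sub>F j in sequentially. bichar_near e (G j) \<gamma>)"
proof -
  have "bichar_conv G \<gamma> \<longleftrightarrow>
      ereal (fst \<gamma>) \<le> liminf (\<lambda>j. ereal (fst (G j))) \<and>
      limsup (\<lambda>j. ereal (fst (snd (G j)))) \<le> ereal (fst (snd \<gamma>)) \<and>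
      ((\<lambda>j. snd (snd (G j))) \<longlonglongrightarrow> snd (snd \<gamma>))"
    by (cases \<gamma>) (simp add: bichar_conv_def)
  then show ?thesis
    unfolding ereal_le_liminf_iff limsup_le_ereal_iff tendsto_iff bichar_near_def eventually_conj_iff
    by blast
qed

lemma bichar_near_trans:
  "bichar_near e K H \<Longrightarrow> bichar_near e' H \<gamma> \<Longrightarrow> bichar_near (e + e') K \<gamma>"
  unfolding bichar_near_def by (smt (verit) dist_triangle)

lemma bichar_near_mono: "bichar_near e K \<gamma> \<Longrightarrow> e \<le> e' \<Longrightarrow> bichar_near e' K \<gamma>"
  unfolding bichar_near_def by auto

lemma bichar_conv_if_near:
  assumes "\<And>m. bichar_near (1 / (real m + 1)) (K m) \<gamma>"
  shows "bichar_conv K \<gamma>"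
  unfolding bichar_conv_iff_eventually_near
proof (intro allI impI)
  fix e :: real assume "e > 0"
  then have "\<forall>\<^sub>F m in sequentially. 1 / (real m + 1) < e"
    using LIMSEQ_inverse_real_of_nat_add order_tendstoD(2) by (force simp: inverse_eq_divide add.commute)
  then show "\<forall>\<^sub>F m in sequentially. bichar_near e (K m) \<gamma>"
    by eventually_elim (meson assms bichar_near_mono less_imp_le)
qed

lemma exists_near_short_if_Lp_less:
  assumes "Lp p \<gamma> < ereal c" "e > 0"
  obtains K where "is_bichar K" "strong_sign_change p K" "bichar_len K < c" "bichar_near e K \<gamma>"
proof -
  from assms(1) obtain G where G: "\<forall>j. is_bichar (G j) \<and> strong_sign_change p (G j)"
      "bichar_conv G \<gamma>" "liminf (\<lambda>j. ereal (bichar_len (G j))) < ereal c"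
    unfolding Lp_def Inf_less_iff by blast
  have "\<exists>\<^sub>F j in sequentially. bichar_len (G j) < c"
    using frequently_less_if_liminf_less[OF G(3)] by simp
  moreover have "\<forall>\<^sub>F j in sequentially. bichar_near e (G j) \<gamma>"
    using G(2) assms(2) bichar_conv_iff_eventually_near by blast
  ultimately obtain j where "bichar_len (G j) < c" "bichar_near e (G j) \<gamma>"
    using frequently_eventually_frequently frequently_ex by blast
  with G(1) that show ?thesis by blast
qed

lemma Lp_le_if_near_short:
  assumes "\<And>m. \<exists>K. is_bichar K \<and> strong_sign_change p K \<and> bichar_len K < c \<and>
      bichar_near (1 / (real m + 1)) K \<gamma>"
  shows "Lp p \<gamma> \<le> ereal c"
proof -
  from assms obtain K where K: "\<And>m. is_bichar (K m) \<and> strong_sign_change p (K m) \<and>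
      bichar_len (K m) < c \<and> bichar_near (1 / (real m + 1)) (K m) \<gamma>"
    by metis
  then have "bichar_conv K \<gamma>" by (intro bichar_conv_if_near) blast
  then have "Lp p \<gamma> \<le> liminf (\<lambda>m. ereal (bichar_len (K m)))"
    unfolding Lp_def using K by (intro Inf_lower) blast
  also have "\<dots> \<le> liminf (\<lambda>m. ereal c)"
    using K by (intro Liminf_mono always_eventually) (simp add: less_imp_le)
  finally show ?thesis by (simp add: Liminf_const)
qed

theorem lemma2p15:
  fixes p :: "'m::finite cpt \<Rightarrow> complex"
    and \<gamma> :: "'m bichar" and G :: "nat \<Rightarrow> 'm bichar"
  assumes "smooth_on cotangent_minus_zero p"
    and "\<forall>z \<in> cotangent_minus_zero. Re (p z) = fst (snd (snd z))"
    and "is_bichar \<gamma>"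
    and "\<forall>j. is_bichar (G j)"
    and "\<forall>j. strong_sign_change p (G j)"
    and "bichar_conv G \<gamma>"
  shows "Lp p \<gamma> \<le> liminf (\<lambda>j. Lp p (G j))"
proof (rule dense_ge)
  fix y assume less: "liminf (\<lambda>j. Lp p (G j)) < y"
  show "Lp p \<gamma> \<le> y"
  proof (cases y)
    case (real c)
    have "\<exists>K. is_bichar K \<and> strong_sign_change p K \<and> bichar_len K < c \<and>
        bichar_near (1 / (real m + 1)) K \<gamma>" for m
    proof -
      define e where "e = 1 / (real m + 1) / 2"
      have "e > 0" by (simp add: e_def)
      have "\<exists>\<^sub>F j in sequentially. Lp p (G j) < ereal c"
        using frequently_less_if_liminf_less less real by blast
      moreover have "\<forall>\<^sub>F j in sequentially. bichar_near e (G j) \<gamma>"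
        using assms(6) \<open>e > 0\<close> bichar_conv_iff_eventually_near by blast
      ultimately obtain j where "Lp p (G j) < ereal c" "bichar_near e (G j) \<gamma>"
        using frequently_eventually_frequently frequently_ex by blast
      moreover obtain K where "is_bichar K" "strong_sign_change p K" "bichar_len K < c"
          "bichar_near e K (G j)"
        using exists_near_short_if_Lp_less[OF \<open>Lp p (G j) < ereal c\<close> \<open>e > 0\<close>] by blast
      moreover have "e + e = 1 / (real m + 1)" by (simp add: e_def field_simps)
      ultimately show ?thesis by (metis bichar_near_trans)
    qed
    then show ?thesis using real Lp_le_if_near_short by blast
  qed (use less in auto)
qed

end
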